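(* Let $A,X^1,\ldots,X^m\in M_n(\mathbb{C})$ with $1\le m\le n$. Let $B$ be the $\binom{n}{m}\times\binom{n}{m}$ matrix indexed by $Q_{m,n}$ whose $(\mathcal{J},\mathcal{I})$-entry is $\operatorname{per}A(\mathcal{I}|\mathcal{J})$, and let $C=P_m(X^1\vee\cdots\vee X^m)P_m$, viewed as the $\binom{n}{m}\times\binom{n}{m}$ matrix indexed by $Q_{m,n}$ (with respect to the basis $\{e_\alpha:\alpha\in Q_{m,n}\}$). Then $$D^m\operatorname{per}(A)(X^1,\ldots,X^m)=m!\,\operatorname{tr}(BC).$$ In particular $D^m\operatorname{per}(A)(X,\ldots,X)=m!\,\operatorname{tr}\big(B\,P_m(\vee^mX)P_m\big)$.
   Context: $\mathcal{H}=\mathbb{C}^n$ with orthonormal basis $e_1,\ldots,e_n$; $G_{m,n}=\{(i_1,\ldots,i_m):1\le i_1\le\cdots\le i_m\le n\}$, $Q_{m,n}\subseteq G_{m,n}$ the strictly increasing tuples. $\vee^m\mathcal{H}$ has orthonormal basis $\{m(\alpha)^{-1/2}e_\alpha:\alpha\in G_{m,n}\}$, where $e_\alpha=e_{\alpha_1}\vee\cdots\vee e_{\alpha_m}$ and $m(\alpha)=m_1!\cdots m_\ell!$ for multiplicities $m_1,\ldots,m_\ell$ of the distinct values in $\alpha$. $X^1\vee\cdots\vee X^m$ is the restriction to $\vee^m\mathcal{H}$ of $\frac{1}{m!}\sum_{\sigma\in S_m}X^{\sigma(1)}\otimes\cdots\otimes X^{\sigma(m)}$; $\vee^mX=X\vee\cdots\vee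 X$. $P_m$ is the orthogonal projection of $\vee^m\mathcal{H}$ onto the span of $\{e_\alpha:\alpha\in Q_{m,n}\}$. $A(\mathcal{I}|\mathcal{J})$ is $A$ with rows $\mathcal{I}$, columns $\mathcal{J}$ deleted; $\operatorname{per}$ is the permanent; $D^m\operatorname{per}(A)(X^1,\ldots,X^m)=\frac{\partial^m}{\partial t_1\cdots\partial t_m}\big|_{t=0}\operatorname{per}(A+\sum_it_iX^i)$. *)

theory Defs
  imports "HOL-Analysis.Analysis"
begin

(* Matrices: nat => nat => complex, with indices 0..<n (0-based instead of 1-based).
   A family X^1..X^m is X :: nat => (nat => nat => complex), with X k for k < m. *)

type_synonym cmat = "nat \<Rightarrow> nat \<Rightarrow> complex"

definition per :: "nat \<Rightarrow> cmat \<Rightarrow> complex" where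
  "per n A = (\<Sum>p | p permutes {0..<n}. \<Prod>i<n. A i (p i))"

(* m-tuples over {0..<n}, i.e. indices of the basis e_{i_1} (x) ... (x) e_{i_m} of H^{(x)m} *)
definition tuples :: "nat \<Rightarrow> nat \<Rightarrow> (nat \<Rightarrow> nat) set" where
  "tuples m n = {0..<m} \<rightarrow>\<^sub>E {0..<n}"

definition Qmn :: "nat \<Rightarrow> nat \<Rightarrow> (nat \<Rightarrow> nat) set" where
  "Qmn m n = {\<alpha> \<in> tuples m n. \<forall>i j. i < j \<and> j < m \<longrightarrow> \<alpha> i < \<alpha> j}"

(* A(I|J): A with rows in I and columns in J deleted, remaining rows/columns
   re-indexed increasingly as 0..<card of complement *)
definition del_mat :: "nat \<Rightarrow> cmat \<Rightarrow> nat set \<Rightarrow> nat set \<Rightarrow> cmat" where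
  "del_mat n A I J = (\<lambda>i j. A (sorted_list_of_set ({0..<n} - I) ! i)
                                 (sorted_list_of_set ({0..<n} - J) ! j))"

(* tensors in H^{(x)m} = coefficient functions on tuples *)
type_synonym tensor = "(nat \<Rightarrow> nat) \<Rightarrow> complex"

definition tinner :: "nat \<Rightarrow> nat \<Rightarrow> tensor \<Rightarrow> tensor \<Rightarrow> complex" where
  "tinner m n v w = (\<Sum>i\<in>tuples m n. v i * cnj (w i))"

(* e_alpha = e_{alpha_1} v ... v e_{alpha_m}
           = (1/sqrt m!) sum_sigma e_{alpha_sigma(1)} (x) ... (x) e_{alpha_sigma(m)} *)
definition sym_vec :: "nat \<Rightarrow> (nat \<Rightarrow> nat) \<Rightarrow> tensor" where
  "sym_vec m \<alpha> = (\<lambda>i. complex_of_real (1 / sqrt (fact m)) *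
      (\<Sum>\<sigma> | \<sigma> permutes {0..<m}.
          if i = restrict (\<alpha> \<circ> \<sigma>) {0..<m} then 1 else 0))"

(* X^1 v ... v X^m = (1/m!) sum_sigma X^{sigma(1)} (x) ... (x) X^{sigma(m)} *)
definition sym_op :: "nat \<Rightarrow> nat \<Rightarrow> (nat \<Rightarrow> cmat) \<Rightarrow> tensor \<Rightarrow> tensor" where
  "sym_op m n X v = (\<lambda>i. \<Sum>j\<in>tuples m n.
      ((1 / fact m) * (\<Sum>\<sigma> | \<sigma> permutes {0..<m}. \<Prod>k<m. X (\<sigma> k) (i k) (j k))) * v j)"

(* P_m: orthogonal projection onto span {e_alpha : alpha in Q_{m,n}}
   (an orthonormal family) *)
definition Pm :: "nat \<Rightarrow> nat \<Rightarrow> tensor \<Rightarrow> tensor" where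
  "Pm m n v = (\<lambda>i. \<Sum>\<alpha>\<in>Qmn m n. tinner m n v (sym_vec m \<alpha>) * sym_vec m \<alpha> i)"

(* matrix of C = P_m (X^1 v ... v X^m) P_m w.r.t. the orthonormal basis {e_alpha : alpha in Q}:
   entry (I,J) = < C e_J, e_I > *)
definition Cmat :: "nat \<Rightarrow> nat \<Rightarrow> (nat \<Rightarrow> cmat) \<Rightarrow> (nat \<Rightarrow> nat) \<Rightarrow> (nat \<Rightarrow> nat) \<Rightarrow> complex" where
  "Cmat m n X I J = tinner m n (Pm m n (sym_op m n X (Pm m n (sym_vec m J)))) (sym_vec m I)"

definition Bmat :: "nat \<Rightarrow> nat \<Rightarrow> cmat \<Rightarrow> (nat \<Rightarrow> nat) \<Rightarrow> (nat \<Rightarrow> nat) \<Rightarrow> complex" where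
  "Bmat m n A J I = per (n - m) (del_mat n A (I ` {0..<m}) (J ` {0..<m}))"

definition trBC :: "nat \<Rightarrow> nat \<Rightarrow> cmat \<Rightarrow> (nat \<Rightarrow> cmat) \<Rightarrow> complex" where
  "trBC m n A X = (\<Sum>J\<in>Qmn m n. \<Sum>I\<in>Qmn m n. Bmat m n A J I * Cmat m n X I J)"

fun pderivs :: "nat \<Rightarrow> ((nat \<Rightarrow> complex) \<Rightarrow> complex) \<Rightarrow> (nat \<Rightarrow> complex) \<Rightarrow> complex" where
  "pderivs 0 g = g"
| "pderivs (Suc k) g = (\<lambda>t. deriv (\<lambda>s. pderivs k g (t(k := s))) (t k))"

(* D^m per(A)(X^1,...,X^m) = d^m/dt_1...dt_m |_{t=0} per(A + sum_i t_i X^i) *)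
definition Dper :: "nat \<Rightarrow> nat \<Rightarrow> cmat \<Rightarrow> (nat \<Rightarrow> cmat) \<Rightarrow> complex" where
  "Dper m n A X = pderivs m (\<lambda>t. per n (\<lambda>i j. A i j + (\<Sum>k<m. t k * X k i j))) (\<lambda>_. 0)"

end

theory Submission
  imports Defs
begin

(* Both sides are expanded into one and the same double sum over injective
   m-tuples r, s of indices (minor_term):
     sum_{r,s} per A(r[m] | s[m]) * prod_k X^k(r_k, s_k).
   Derivative side: differentiating per(A + sum_i t_i X^i) once in each t_k
   (product rule, pderivs_sum_prod_affine) gives a sum over permutations p
   and injective row tuples r (Dper_expansion); grouping the permutations by
   the columns s = p o r they assign to r, the remaining sum over p is the
   permanent of the complementary minor (per_minor_as_fiber_sum).
   Trace side: {e_alpha} is orthonormal, so the projections P_m drop out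
   and m! C(I,J) = sum_{tau,rho} prod_k X^k(I_{tau k}, J_{rho k})
   (Cmat_formula); the pairs (I, tau) with I increasing are exactly the
   injective tuples (bij_betw_arrange), which identifies m! tr(BC) with the
   same double sum (trBC_minor_expansion). *)

(* Injective k-tuples with entries in S, as extensional functions on {0..<k}.
   They index the ways of choosing, in order, the rows hit by the k directions. *)
definition inj_tuples :: "nat \<Rightarrow> 'a set \<Rightarrow> (nat \<Rightarrow> 'a) set" where
  "inj_tuples k S = {r \<in> {0..<k} \<rightarrow>\<^sub>E S. inj_on r {0..<k}}"

lemma finite_inj_tuples: "finite S \<Longrightarrow> finite (inj_tuples k S)"
  unfolding inj_tuples_def by (rule finite_subset[of _ "{0..<k} \<rightarrow>\<^sub>E S"]) (auto intro: finite_PiE)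

lemma inj_tuples_0: "inj_tuples 0 S = {\<lambda>_. undefined}"
  unfolding inj_tuples_def by auto

lemma inj_tuples_Suc_iff:
  "r' \<in> inj_tuples (Suc k) S \<longleftrightarrow>
     r'(k := undefined) \<in> inj_tuples k S \<and> r' k \<in> S - r' ` {0..<k}"
proof -
  have "inj_on r' {0..<Suc k} \<longleftrightarrow> inj_on r' {0..<k} \<and> r' k \<notin> r' ` {0..<k}"
    by (simp add: atLeast0_lessThan_Suc)
  moreover have "inj_on (r'(k := undefined)) {0..<k} \<longleftrightarrow> inj_on r' {0..<k}"
    by (rule inj_on_cong) auto
  moreover have "r' \<in> {0..<Suc k} \<rightarrow>\<^sub>E S \<longleftrightarrow> r'(k := undefined) \<in> {0..<k} \<rightarrow>\<^sub>E S \<and> r' k \<in> S"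
    by (auto simp: PiE_iff extensional_def less_Suc_eq)
  ultimately show ?thesis
    unfolding inj_tuples_def by auto
qed

lemma inj_tuples_undefined: "r \<in> inj_tuples k S \<Longrightarrow> r k = undefined"
  unfolding inj_tuples_def by (auto simp: PiE_iff extensional_def)

lemma bij_betw_extend_inj_tuples:
  "bij_betw (\<lambda>(r, i). r(k := i)) (SIGMA r:inj_tuples k S. S - r ` {0..<k}) (inj_tuples (Suc k) S)"
proof (rule bij_betw_byWitness[where f' = "\<lambda>r'. (r'(k := undefined), r' k)"])
  show "\<forall>z\<in>SIGMA r:inj_tuples k S. S - r ` {0..<k}. (\<lambda>r'. (r'(k := undefined), r' k)) ((\<lambda>(r, i). r(k := i)) z) = z"
  proof
    fix z assume "z \<in> (SIGMA r:inj_tuples k S. S - r ` {0..<k})"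
    then obtain r i where z: "z = (r, i)" "r \<in> inj_tuples k S" by auto
    then have "r(k := undefined) = r" using inj_tuples_undefined fun_upd_triv by metis
    then show "(\<lambda>r'. (r'(k := undefined), r' k)) ((\<lambda>(r, i). r(k := i)) z) = z" using z by simp
  qed
  show "\<forall>r'\<in>inj_tuples (Suc k) S. (\<lambda>(r, i). r(k := i)) (r'(k := undefined), r' k) = r'"
    by simp
  have "r(k := i) \<in> inj_tuples (Suc k) S" if "r \<in> inj_tuples k S" "i \<in> S - r ` {0..<k}" for r i
  proof -
    have "(r(k := i)) ` {0..<k} = r ` {0..<k}" by auto
    moreover have "(r(k := i))(k := undefined) = r"
      using inj_tuples_undefined[OF that(1)] by (metis fun_upd_triv fun_upd_upd)
    ultimately show ?thesis using that unfolding inj_tuples_Suc_iff by simp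
  qed
  then show "(\<lambda>(r, i). r(k := i)) ` (SIGMA r:inj_tuples k S. S - r ` {0..<k}) \<subseteq> inj_tuples (Suc k) S"
    by auto
  show "(\<lambda>r'. (r'(k := undefined), r' k)) ` inj_tuples (Suc k) S \<subseteq> (SIGMA r:inj_tuples k S. S - r ` {0..<k})"
  proof (rule image_subsetI)
    fix r' assume "r' \<in> inj_tuples (Suc k) S"
    moreover have "(r'(k := undefined)) ` {0..<k} = r' ` {0..<k}" by auto
    ultimately show "(r'(k := undefined), r' k) \<in> (SIGMA r:inj_tuples k S. S - r ` {0..<k})"
      unfolding inj_tuples_Suc_iff by simp
  qed
qed

lemma sum_inj_tuples_Suc:
  assumes "finite S"
  shows "(\<Sum>r\<in>inj_tuples k S. \<Sum>i\<in>S - r ` {0..<k}. H (r(k := i))) = (\<Sum>r'\<in>inj_tuples (Suc k) S. H r')"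
proof -
  have "(\<Sum>r\<in>inj_tuples k S. \<Sum>i\<in>S - r ` {0..<k}. H (r(k := i)))
      = (\<Sum>z\<in>(SIGMA r:inj_tuples k S. S - r ` {0..<k}). H ((\<lambda>(r, i). r(k := i)) z))"
    by (subst sum.Sigma) (auto simp: assms finite_inj_tuples split_def)
  also have "\<dots> = (\<Sum>r'\<in>inj_tuples (Suc k) S. H r')"
    by (rule sum.reindex_bij_betw[OF bij_betw_extend_inj_tuples])
  finally show ?thesis .
qed

definition affine_form :: "('i \<Rightarrow> complex) \<Rightarrow> (nat \<Rightarrow> 'i \<Rightarrow> complex) \<Rightarrow> nat \<Rightarrow> (nat \<Rightarrow> complex) \<Rightarrow> 'i \<Rightarrow> complex" where
  "affine_form a x m t i = a i + (\<Sum>j<m. t j * x j i)"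

lemma affine_form_deriv:
  assumes "k < m"
  shows "((\<lambda>s. affine_form a x m (t(k := s)) i) has_field_derivative x k i) (at s)"
proof -
  have "(\<Sum>j\<in>{..<m} - {k}. (t(k := s)) j * x j i) = (\<Sum>j\<in>{..<m} - {k}. t j * x j i)" for s
    by (rule sum.cong) auto
  then have "affine_form a x m (t(k := s)) i = (a i + (\<Sum>j\<in>{..<m} - {k}. t j * x j i)) + s * x k i" for s
    unfolding affine_form_def using assms by (simp add: sum.remove[of "{..<m}" k] algebra_simps)
  then show ?thesis
    by (simp del: fun_upd_apply) (auto intro!: derivative_eq_intros)
qed

(* Iterated partial derivatives of a sum of products of affine forms: each of
   the first k derivatives replaces one factor, at a position not yet used,
   by the corresponding direction (product rule, by induction on k). *)
lemma pderivs_sum_prod_affine: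
  fixes a :: "'p \<Rightarrow> 'i \<Rightarrow> complex" and x :: "'p \<Rightarrow> nat \<Rightarrow> 'i \<Rightarrow> complex"
  assumes "finite P" "finite S" "k \<le> m"
  shows "pderivs k (\<lambda>t. \<Sum>p\<in>P. \<Prod>i\<in>S. affine_form (a p) (x p) m t i) t =
    (\<Sum>p\<in>P. \<Sum>r\<in>inj_tuples k S. (\<Prod>j<k. x p j (r j)) * (\<Prod>i\<in>S - r ` {0..<k}. affine_form (a p) (x p) m t i))"
  using assms(3)
proof (induction k arbitrary: t)
  case 0
  then show ?case by (simp add: inj_tuples_0)
next
  case (Suc k)
  let ?L = "\<lambda>p t i. affine_form (a p) (x p) m t i"
  let ?R = "\<lambda>r. S - r ` {0..<k}"
  have km: "k < m" using Suc.prems by simp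
  have "((\<lambda>s. pderivs k (\<lambda>t. \<Sum>p\<in>P. \<Prod>i\<in>S. ?L p t i) (t(k := s))) has_field_derivative
      (\<Sum>p\<in>P. \<Sum>r\<in>inj_tuples k S. (\<Prod>j<k. x p j (r j)) *
         (\<Sum>i0\<in>?R r. x p k i0 * (\<Prod>i\<in>?R r - {i0}. ?L p (t(k := s)) i)))) (at s)" for s
    unfolding Suc.IH[OF Suc_leD[OF Suc.prems]]
    by (intro DERIV_sum DERIV_cmult has_field_derivative_prod affine_form_deriv km)
  from DERIV_imp_deriv[OF this[of "t k"]] have "pderivs (Suc k) (\<lambda>t. \<Sum>p\<in>P. \<Prod>i\<in>S. ?L p t i) t
      = (\<Sum>p\<in>P. \<Sum>r\<in>inj_tuples k S. (\<Prod>j<k. x p j (r j)) *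
         (\<Sum>i0\<in>?R r. x p k i0 * (\<Prod>i\<in>?R r - {i0}. ?L p t i)))"
    by simp
  also have "\<dots> = (\<Sum>p\<in>P. \<Sum>r\<in>inj_tuples k S. \<Sum>i0\<in>?R r.
      (\<Prod>j<Suc k. x p j ((r(k := i0)) j)) * (\<Prod>i\<in>S - (r(k := i0)) ` {0..<Suc k}. ?L p t i))"
  proof (intro sum.cong refl, unfold sum_distrib_left, intro sum.cong refl)
    fix p and r :: "nat \<Rightarrow> 'i" and i0
    have "(r(k := i0)) ` {0..<Suc k} = insert i0 (r ` {0..<k})"
      by (auto simp: image_def less_Suc_eq)
    moreover have "(\<Prod>j<k. x p j ((r(k := i0)) j)) = (\<Prod>j<k. x p j (r j))"
      by (rule prod.cong) auto
    ultimately show "(\<Prod>j<k. x p j (r j)) * (x p k i0 * (\<Prod>i\<in>?R r - {i0}. ?L p t i)) =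
        (\<Prod>j<Suc k. x p j ((r(k := i0)) j)) * (\<Prod>i\<in>S - (r(k := i0)) ` {0..<Suc k}. ?L p t i)"
      by (simp add: Diff_insert[symmetric] mult.assoc)
  qed
  also have "\<dots> = (\<Sum>p\<in>P. \<Sum>r\<in>inj_tuples (Suc k) S.
      (\<Prod>j<Suc k. x p j (r j)) * (\<Prod>i\<in>S - r ` {0..<Suc k}. ?L p t i))"
    by (intro sum.cong refl sum_inj_tuples_Suc assms(2))
  finally show ?case .
qed

lemma Dper_expansion:
  assumes "m \<le> n"
  shows "Dper m n A X = (\<Sum>p | p permutes {0..<n}. \<Sum>r\<in>inj_tuples m {0..<n}.
     (\<Prod>j<m. X j (r j) (p (r j))) * (\<Prod>i\<in>{0..<n} - r ` {0..<m}. A i (p i)))"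
proof -
  let ?a = "\<lambda>p i. A i (p i)" and ?x = "\<lambda>p j i. X j i (p i)"
  have "(\<lambda>t. per n (\<lambda>i j. A i j + (\<Sum>k<m. t k * X k i j))) =
      (\<lambda>t. \<Sum>p | p permutes {0..<n}. \<Prod>i\<in>{0..<n}. affine_form (?a p) (?x p) m t i)"
    unfolding per_def affine_form_def by (simp add: atLeast0LessThan)
  then have "Dper m n A X = pderivs m (\<lambda>t. \<Sum>p | p permutes {0..<n}.
      \<Prod>i\<in>{0..<n}. affine_form (?a p) (?x p) m t i) (\<lambda>_. 0)"
    unfolding Dper_def by simp
  also have "\<dots> = (\<Sum>p | p permutes {0..<n}. \<Sum>r\<in>inj_tuples m {0..<n}.
      (\<Prod>j<m. ?x p j (r j)) * (\<Prod>i\<in>{0..<n} - r ` {0..<m}. affine_form (?a p) (?x p) m (\<lambda>_. 0) i))"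
    by (rule pderivs_sum_prod_affine) (simp_all add: finite_permutations)
  finally show ?thesis
    by (simp add: affine_form_def)
qed

lemma sum_permutes_fixing:
  assumes "p0 permutes D" "R \<subseteq> D"
  shows "(\<Sum>p | p permutes D \<and> (\<forall>x\<in>R. p x = p0 x). f p) = (\<Sum>q | q permutes D - R. f (p0 \<circ> q))"
proof -
  have "bij_betw ((\<circ>) p0) {q. q permutes D - R} {p. p permutes D \<and> (\<forall>x\<in>R. p x = p0 x)}"
  proof (rule bij_betw_byWitness[where f' = "(\<circ>) (inv p0)"])
    show "\<forall>q\<in>{q. q permutes D - R}. inv p0 \<circ> (p0 \<circ> q) = q"
      using permutes_inv_o(2)[OF assms(1)] by (simp add: o_assoc)
    show "\<forall>p\<in>{p. p permutes D \<and> (\<forall>x\<in>R. p x = p0 x)}. p0 \<circ> (inv p0 \<circ> p) = p"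
      using permutes_inv_o(1)[OF assms(1)] by (simp add: o_assoc)
    show "(\<circ>) p0 ` {q. q permutes D - R} \<subseteq> {p. p permutes D \<and> (\<forall>x\<in>R. p x = p0 x)}"
    proof (rule image_subsetI)
      fix q assume "q \<in> {q. q permutes D - R}"
      then have q: "q permutes D - R" by simp
      have "p0 \<circ> q permutes D"
        using permutes_subset[OF q, of D] assms(1) by (intro permutes_compose) auto
      moreover have "\<forall>x\<in>R. (p0 \<circ> q) x = p0 x"
        using permutes_not_in[OF q] by simp
      ultimately show "p0 \<circ> q \<in> {p. p permutes D \<and> (\<forall>x\<in>R. p x = p0 x)}" by simp
    qed
    have "inv p0 \<circ> p permutes D - R" if "p permutes D" "\<forall>x\<in>R. p x = p0 x" for p
    proof (rule permutes_superset)
      show "inv p0 \<circ> p permutes D"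
        using that(1) permutes_inv[OF assms(1)] by (rule permutes_compose)
      show "(inv p0 \<circ> p) x = x" if "x \<in> D - (D - R)" for x
        using that \<open>\<forall>x\<in>R. p x = p0 x\<close> permutes_inverses(2)[OF assms(1)] by simp
    qed
    then show "(\<circ>) (inv p0) ` {p. p permutes D \<and> (\<forall>x\<in>R. p x = p0 x)} \<subseteq> {q. q permutes D - R}"
      by auto
  qed
  then show ?thesis by (rule sum.reindex_bij_betw[symmetric, unfolded comp_def])
qed

lemma sum_permutes_conjugate:
  fixes N :: nat
  assumes "bij_betw f {0..<N} U"
  shows "(\<Sum>q | q permutes {0..<N}. \<Prod>i<N. A (f i) (h (f (q i))))
       = (\<Sum>q | q permutes U. \<Prod>u\<in>U. A u (h (q u)))"
proof -
  let ?conj = "\<lambda>q x. if x \<in> U then f (q (inv_into {0..<N} f x)) else x"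
  have "(\<Prod>i<N. A (f i) (h (f (q i)))) = (\<Prod>u\<in>U. A u (h (?conj q u)))" for q
  proof -
    have "(\<Prod>u\<in>U. A u (h (?conj q u))) = (\<Prod>i\<in>{0..<N}. A (f i) (h (?conj q (f i))))"
      by (rule prod.reindex_bij_betw[OF assms, symmetric])
    also have "\<dots> = (\<Prod>i\<in>{0..<N}. A (f i) (h (f (q i))))"
    proof (rule prod.cong[OF refl])
      fix i assume "i \<in> {0..<N}"
      then have "f i \<in> U" "inv_into {0..<N} f (f i) = i"
        using assms by (auto simp: bij_betw_inv_into_left bij_betwE)
      then show "A (f i) (h (?conj q (f i))) = A (f i) (h (f (q i)))" by simp
    qed
    finally show ?thesis by (simp add: atLeast0LessThan)
  qed
  moreover have "(\<Sum>q | q permutes {0..<N}. \<Prod>u\<in>U. A u (h (?conj q u)))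
      = (\<Sum>q | q permutes U. \<Prod>u\<in>U. A u (h (q u)))"
    by (rule sum.reindex_bij_betw[OF bij_betw_permutations[OF assms]])
  ultimately show ?thesis by simp
qed

lemma permutes_glue:
  assumes "bij_betw b1 R1 R2" "bij_betw b2 U1 U2"
    and "R1 \<union> U1 = D" "R2 \<union> U2 = D" "R1 \<inter> U1 = {}" "R2 \<inter> U2 = {}"
  obtains p where "p permutes D" "\<And>x. x \<in> R1 \<Longrightarrow> p x = b1 x" "\<And>x. x \<in> U1 \<Longrightarrow> p x = b2 x"
proof
  let ?p = "\<lambda>x. if x \<in> R1 then b1 x else if x \<in> U1 then b2 x else x"
  show "?p permutes D"
  proof (rule bij_imp_permutes)
    have "bij_betw (\<lambda>x. if x \<in> R1 then b1 x else b2 x) D D"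
      using bij_betw_disjoint_Un[OF assms(1,2,5,6)] unfolding assms(3,4) .
    then show "bij_betw ?p D D"
      using assms(3) by (subst bij_betw_cong[where g = "\<lambda>x. if x \<in> R1 then b1 x else b2 x"]) auto
  qed (use assms(3) in auto)
qed (use assms(5) in auto)

lemma bij_betw_sorted_nth:
  assumes "finite U"
  shows "bij_betw ((!) (sorted_list_of_set U)) {0..<card U} U"
  using assms by (intro bij_betw_nth) auto

lemma per_minor_as_fiber_sum:
  assumes r: "r \<in> inj_tuples m {0..<n}" and s: "s \<in> inj_tuples m {0..<n}"
  shows "per (n - m) (del_mat n A (r ` {0..<m}) (s ` {0..<m}))
       = (\<Sum>p | p permutes {0..<n} \<and> (\<forall>k<m. p (r k) = s k). \<Prod>i\<in>{0..<n} - r ` {0..<m}. A i (p i))"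
proof -
  define R S U V where "R = r ` {0..<m}" and "S = s ` {0..<m}"
    and "U = {0..<n} - R" and "V = {0..<n} - S"
  define f g where "f = (!) (sorted_list_of_set U)" and "g = (!) (sorted_list_of_set V)"
  have bR: "bij_betw r {0..<m} R" and bS: "bij_betw s {0..<m} S" and "R \<subseteq> {0..<n}" "S \<subseteq> {0..<n}"
    using r s unfolding R_def S_def inj_tuples_def by (auto simp: bij_betw_def PiE_iff)
  then have "card U = n - m" "card V = n - m"
    unfolding U_def V_def by (simp_all add: card_Diff_subset finite_subset bij_betw_same_card[symmetric])
  then have bU: "bij_betw f {0..<n - m} U" and bV: "bij_betw g {0..<n - m} V"
    unfolding f_def g_def by (metis bij_betw_sorted_nth U_def V_def finite_Diff finite_atLeastLessThan)+
  obtain p0 where p0: "p0 permutes {0..<n}"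
    and p0R: "\<And>x. x \<in> R \<Longrightarrow> p0 x = (s \<circ> the_inv_into {0..<m} r) x"
    and p0U: "\<And>x. x \<in> U \<Longrightarrow> p0 x = (g \<circ> the_inv_into {0..<n - m} f) x"
    by (rule permutes_glue[where D = "{0..<n}", OF bij_betw_trans[OF bij_betw_the_inv_into[OF bR] bS]
          bij_betw_trans[OF bij_betw_the_inv_into[OF bU] bV]])
       (use \<open>R \<subseteq> {0..<n}\<close> \<open>S \<subseteq> {0..<n}\<close> in \<open>auto simp: U_def V_def\<close>)
  have p0_f: "p0 (f i) = g i" if "i < n - m" for i
    using p0U[of "f i"] bij_betwE[OF bU] the_inv_into_f_f[OF bij_betw_imp_inj_on[OF bU]] that by simp
  have fiber: "(\<forall>x\<in>R. p x = p0 x) \<longleftrightarrow> (\<forall>k<m. p (r k) = s k)" for p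
    using p0R the_inv_into_f_f[OF bij_betw_imp_inj_on[OF bR]] unfolding R_def by auto
  have "per (n - m) (del_mat n A R S) = (\<Sum>q | q permutes {0..<n - m}. \<Prod>i<n - m. A (f i) (g (q i)))"
    unfolding per_def del_mat_def f_def g_def U_def V_def ..
  also have "\<dots> = (\<Sum>q | q permutes {0..<n - m}. \<Prod>i<n - m. A (f i) (p0 (f (q i))))"
  proof (intro sum.cong prod.cong refl)
    fix q i assume "q \<in> {q. q permutes {0..<n - m}}" "i \<in> {..<n - m}"
    then have "q i < n - m" using permutes_in_image[of q "{0..<n - m}" i] by simp
    then show "A (f i) (g (q i)) = A (f i) (p0 (f (q i)))" by (simp add: p0_f)
  qed
  also have "\<dots> = (\<Sum>q | q permutes U. \<Prod>u\<in>U. A u (p0 (q u)))"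
    by (rule sum_permutes_conjugate[OF bU])
  also have "\<dots> = (\<Sum>p | p permutes {0..<n} \<and> (\<forall>x\<in>R. p x = p0 x). \<Prod>u\<in>U. A u (p u))"
    using sum_permutes_fixing[OF p0 \<open>R \<subseteq> {0..<n}\<close>, of "\<lambda>p. \<Prod>u\<in>U. A u (p u)"]
    by (simp add: U_def)
  finally show ?thesis
    unfolding fiber by (simp only: U_def R_def S_def)
qed

(* Every permutation p lies in exactly one such fibre, namely that of the
   injective tuple p o r. *)
lemma sum_over_fibers:
  fixes n :: nat
  assumes r: "r \<in> inj_tuples m {0..<n}"
  shows "(\<Sum>s\<in>inj_tuples m {0..<n}. \<Sum>p | p permutes {0..<n} \<and> (\<forall>k<m. p (r k) = s k). W p)
       = (\<Sum>p | p permutes {0..<n}. W p)"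
proof -
  let ?g = "\<lambda>p. restrict (p \<circ> r) {0..<m}"
  have rP: "r \<in> {0..<m} \<rightarrow>\<^sub>E {0..<n}" and ri: "inj_on r {0..<m}"
    using r unfolding inj_tuples_def by auto
  have into: "?g ` {p. p permutes {0..<n}} \<subseteq> inj_tuples m {0..<n}"
  proof (rule image_subsetI)
    fix p assume "p \<in> {p. p permutes {0..<n}}"
    then have p: "p permutes {0..<n}" by simp
    have "inj_on (p \<circ> r) {0..<m}"
      using ri permutes_inj[OF p] by (simp add: comp_inj_on inj_on_subset[of p UNIV])
    then show "?g p \<in> inj_tuples m {0..<n}"
      using rP permutes_in_image[OF p] unfolding inj_tuples_def by (auto simp: PiE_iff inj_on_def)
  qed
  have fiber: "{p. p permutes {0..<n} \<and> (\<forall>k<m. p (r k) = s k)} = {p \<in> {p. p permutes {0..<n}}. ?g p = s}"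
    if "s \<in> inj_tuples m {0..<n}" for s
  proof -
    have "s \<in> extensional {0..<m}" using that unfolding inj_tuples_def by (auto simp: PiE_iff)
    then have "(\<forall>k<m. p (r k) = s k) \<longleftrightarrow> ?g p = s" for p
      by (auto simp: fun_eq_iff extensional_def)
    then show ?thesis by auto
  qed
  have "(\<Sum>s\<in>inj_tuples m {0..<n}. \<Sum>p | p permutes {0..<n} \<and> (\<forall>k<m. p (r k) = s k). W p)
      = (\<Sum>s\<in>inj_tuples m {0..<n}. \<Sum>p\<in>{p \<in> {p. p permutes {0..<n}}. ?g p = s}. W p)"
    by (rule sum.cong[OF refl]) (simp only: fiber)
  also have "\<dots> = (\<Sum>p | p permutes {0..<n}. W p)"
    by (rule sum.group) (simp_all add: finite_permutations finite_inj_tuples into)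
  finally show ?thesis .
qed

(* The common summand of both sides of the theorem: for injective tuples
   r, s the permanent of the complementary minor times prod_k X^k(r_k, s_k). *)
definition minor_term :: "nat \<Rightarrow> nat \<Rightarrow> cmat \<Rightarrow> (nat \<Rightarrow> cmat) \<Rightarrow> (nat \<Rightarrow> nat) \<Rightarrow> (nat \<Rightarrow> nat) \<Rightarrow> complex" where
  "minor_term m n A X r s = per (n - m) (del_mat n A (r ` {0..<m}) (s ` {0..<m})) * (\<Prod>k<m. X k (r k) (s k))"

(* The derivative side: group the permutations in Dper_expansion by the
   tuple of columns assigned to the rows r_1,...,r_m. *)
lemma Dper_minor_expansion:
  assumes "m \<le> n"
  shows "Dper m n A X = (\<Sum>r\<in>inj_tuples m {0..<n}. \<Sum>s\<in>inj_tuples m {0..<n}. minor_term m n A X r s)"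
proof -
  define W where "W p r = (\<Prod>j<m. X j (r j) (p (r j))) * (\<Prod>i\<in>{0..<n} - r ` {0..<m}. A i (p i))"
    for p r :: "nat \<Rightarrow> nat"
  have fiber_sum: "minor_term m n A X r s = (\<Sum>p | p permutes {0..<n} \<and> (\<forall>k<m. p (r k) = s k). W p r)"
    if "r \<in> inj_tuples m {0..<n}" "s \<in> inj_tuples m {0..<n}" for r s
    unfolding minor_term_def per_minor_as_fiber_sum[OF that] sum_distrib_right W_def
    by (intro sum.cong refl) (auto simp: mult.commute intro!: prod.cong)
  have "Dper m n A X = (\<Sum>r\<in>inj_tuples m {0..<n}. \<Sum>p | p permutes {0..<n}. W p r)"
    unfolding Dper_expansion[OF assms] W_def by (rule sum.swap)
  also have "\<dots> = (\<Sum>r\<in>inj_tuples m {0..<n}. \<Sum>s\<in>inj_tuples m {0..<n}. minor_term m n A X r s)"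
  proof (rule sum.cong[OF refl])
    fix r assume r: "r \<in> inj_tuples m {0..<n}"
    show "(\<Sum>p | p permutes {0..<n}. W p r) = (\<Sum>s\<in>inj_tuples m {0..<n}. minor_term m n A X r s)"
      unfolding sum_over_fibers[OF r, symmetric] by (rule sum.cong[OF refl]) (simp add: fiber_sum[OF r])
  qed
  finally show ?thesis .
qed

lemma Qmn_iff: "I \<in> Qmn m n \<longleftrightarrow> I \<in> {0..<m} \<rightarrow>\<^sub>E {0..<n} \<and> (\<forall>i j. i < j \<and> j < m \<longrightarrow> I i < I j)"
  unfolding Qmn_def tuples_def by simp

lemma finite_Qmn: "finite (Qmn m n)"
  unfolding Qmn_def tuples_def by (rule finite_subset[of _ "{0..<m} \<rightarrow>\<^sub>E {0..<n}"]) (auto intro: finite_PiE)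

lemma Qmn_inj: "I \<in> Qmn m n \<Longrightarrow> inj_on I {0..<m}"
  unfolding Qmn_iff inj_on_def by (metis atLeastLessThan_iff linorder_neqE_nat less_irrefl)

lemma Qmn_eqI:
  assumes "I \<in> Qmn m n" "I' \<in> Qmn m n" "I ` {0..<m} = I' ` {0..<m}"
  shows "I = I'"
proof -
  have sorted: "sorted_wrt (<) (map J [0..<m])" if "J \<in> Qmn m n" for J
    using that unfolding Qmn_iff sorted_wrt_iff_nth_less by auto
  have "map I [0..<m] = map I' [0..<m]"
    by (rule strict_sorted_equal[OF sorted[OF assms(2)] sorted[OF assms(1)]]) (use assms(3) in simp)
  then have "\<forall>k\<in>{0..<m}. I k = I' k" by simp
  moreover have "I \<in> extensional {0..<m}" "I' \<in> extensional {0..<m}"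
    using assms(1,2) unfolding Qmn_iff by (auto simp: PiE_iff)
  ultimately show ?thesis by (intro extensionalityI) auto
qed

(* The tuple (I_{tau 1},...,I_{tau m}); the defining sum of sym_vec m I runs
   over exactly these tuples. *)
definition arrange :: "nat \<Rightarrow> (nat \<Rightarrow> nat) \<Rightarrow> (nat \<Rightarrow> nat) \<Rightarrow> (nat \<Rightarrow> nat)" where
  "arrange m I \<tau> = restrict (I \<circ> \<tau>) {0..<m}"

lemma arrange_image:
  assumes "\<tau> permutes {0..<m}"
  shows "arrange m I \<tau> ` {0..<m} = I ` {0..<m}"
proof -
  have "arrange m I \<tau> ` {0..<m} = I ` (\<tau> ` {0..<m})"
    unfolding arrange_def by (auto simp: image_def)
  then show ?thesis using permutes_image[OF assms] by simp
qed

lemma arrange_in_inj_tuples: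
  assumes "I \<in> Qmn m n" "\<tau> permutes {0..<m}"
  shows "arrange m I \<tau> \<in> inj_tuples m {0..<n}"
proof -
  have "arrange m I \<tau> \<in> {0..<m} \<rightarrow>\<^sub>E {0..<n}"
    using assms permutes_in_image[OF assms(2)] unfolding arrange_def Qmn_iff by (auto simp: PiE_iff)
  moreover have "inj_on (I \<circ> \<tau>) {0..<m}"
    using Qmn_inj[OF assms(1)] permutes_inj_on[OF assms(2)] permutes_image[OF assms(2)]
    by (simp add: comp_inj_on)
  then have "inj_on (arrange m I \<tau>) {0..<m}" unfolding arrange_def by (simp add: inj_on_def)
  ultimately show ?thesis unfolding inj_tuples_def by simp
qed

lemma arrange_inj: "inj_on (\<lambda>(I, \<tau>). arrange m I \<tau>) (Qmn m n \<times> {\<tau>. \<tau> permutes {0..<m}})"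
proof (rule inj_onI, clarsimp)
  fix I I' \<tau> \<tau>'
  assume I: "I \<in> Qmn m n" "I' \<in> Qmn m n" and t: "\<tau> permutes {0..<m}" "\<tau>' permutes {0..<m}"
    and e: "arrange m I \<tau> = arrange m I' \<tau>'"
  have "I = I'"
    using Qmn_eqI[OF I] arrange_image[OF t(1), of I] arrange_image[OF t(2), of I'] e by simp
  moreover have "\<tau> k = \<tau>' k" for k
  proof (cases "k < m")
    case True
    then have "I (\<tau> k) = I (\<tau>' k)"
      using fun_cong[OF e, of k] \<open>I = I'\<close> by (simp add: arrange_def)
    moreover have "\<tau> k \<in> {0..<m}" "\<tau>' k \<in> {0..<m}"
      using True t permutes_in_image by fastforce+
    ultimately show ?thesis using Qmn_inj[OF I(1)] by (meson inj_onD)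
  next
    case False
    then show ?thesis using t by (simp add: permutes_def)
  qed
  ultimately show "I = I' \<and> \<tau> = \<tau>'" by auto
qed

(* Every injective tuple is an increasing tuple (its sorted image)
   rearranged by a permutation. *)
lemma inj_tuple_sorted_decomposition:
  assumes r: "r \<in> inj_tuples m {0..<n}"
  obtains I \<tau> where "I \<in> Qmn m n" "\<tau> permutes {0..<m}" "r = arrange m I \<tau>"
proof -
  have rP: "r \<in> {0..<m} \<rightarrow>\<^sub>E {0..<n}" and ri: "inj_on r {0..<m}"
    using r unfolding inj_tuples_def by auto
  define L where "L = sorted_list_of_set (r ` {0..<m})"
  have sL: "set L = r ` {0..<m}" and lL: "length L = m" and stL: "sorted_wrt (<) L"
    and dL: "distinct L"
    unfolding L_def using ri by (simp_all add: card_image)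
  define I where "I = restrict ((!) L) {0..<m}"
  have bI: "bij_betw I {0..<m} (r ` {0..<m})"
    using bij_betw_nth[of L "{0..<m}" "set L"] sL lL dL unfolding I_def
    by (simp add: bij_betw_cong[of _ I "(!) L"] atLeast0LessThan)
  have I_Qmn: "I \<in> Qmn m n"
    using stL lL bij_betwE[OF bI] rP unfolding Qmn_iff I_def sorted_wrt_iff_nth_less
    by (auto simp: PiE_iff)
  define \<tau> where "\<tau> = restrict_id (the_inv_into {0..<m} I \<circ> r) {0..<m}"
  have "bij_betw (the_inv_into {0..<m} I \<circ> r) {0..<m} {0..<m}"
    using ri bij_betw_the_inv_into[OF bI] by (intro bij_betw_trans[of r _ "r ` {0..<m}"]) (auto simp: bij_betw_def)
  then have \<tau>_perm: "\<tau> permutes {0..<m}"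
    unfolding \<tau>_def by (rule permutes_restrict_id)
  have "r = arrange m I \<tau>"
  proof (rule extensionalityI[of _ "{0..<m}"])
    show "r \<in> extensional {0..<m}" using rP by (simp add: PiE_iff)
    show "arrange m I \<tau> \<in> extensional {0..<m}" by (simp add: arrange_def)
    fix k assume "k \<in> {0..<m}"
    then show "r k = arrange m I \<tau> k"
      using f_the_inv_into_f_bij_betw[OF bI] by (simp add: arrange_def \<tau>_def)
  qed
  with I_Qmn \<tau>_perm show ?thesis by (rule that)
qed

lemma bij_betw_arrange:
  "bij_betw (\<lambda>(I, \<tau>). arrange m I \<tau>) (Qmn m n \<times> {\<tau>. \<tau> permutes {0..<m}}) (inj_tuples m {0..<n})"
proof -
  have "(\<lambda>(I, \<tau>). arrange m I \<tau>) ` (Qmn m n \<times> {\<tau>. \<tau> permutes {0..<m}}) \<subseteq> inj_tuples m {0..<n}"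
    using arrange_in_inj_tuples by auto
  moreover have "inj_tuples m {0..<n} \<subseteq> (\<lambda>(I, \<tau>). arrange m I \<tau>) ` (Qmn m n \<times> {\<tau>. \<tau> permutes {0..<m}})"
  proof
    fix r assume "r \<in> inj_tuples m {0..<n}"
    then obtain I \<tau> where "I \<in> Qmn m n" "\<tau> permutes {0..<m}" "r = arrange m I \<tau>"
      by (rule inj_tuple_sorted_decomposition)
    then show "r \<in> (\<lambda>(I, \<tau>). arrange m I \<tau>) ` (Qmn m n \<times> {\<tau>. \<tau> permutes {0..<m}})" by force
  qed
  ultimately have "(\<lambda>(I, \<tau>). arrange m I \<tau>) ` (Qmn m n \<times> {\<tau>. \<tau> permutes {0..<m}}) = inj_tuples m {0..<n}"
    by (rule subset_antisym)
  with arrange_inj show ?thesis by (simp add: bij_betw_def)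
qed

lemma sum_inj_tuples_arrange:
  "(\<Sum>r\<in>inj_tuples m {0..<n}. F r) = (\<Sum>I\<in>Qmn m n. \<Sum>\<tau> | \<tau> permutes {0..<m}. F (arrange m I \<tau>))"
proof -
  have "(\<Sum>r\<in>inj_tuples m {0..<n}. F r)
      = (\<Sum>z\<in>Qmn m n \<times> {\<tau>. \<tau> permutes {0..<m}}. F ((\<lambda>(I, \<tau>). arrange m I \<tau>) z))"
    by (rule sum.reindex_bij_betw[OF bij_betw_arrange, symmetric])
  then show ?thesis by (simp add: sum.cartesian_product split_def)
qed

lemma finite_tuples: "finite (tuples m n)"
  unfolding tuples_def by (rule finite_PiE) simp_all

abbreviation sym_scale :: "nat \<Rightarrow> complex" where
  "sym_scale m \<equiv> complex_of_real (1 / sqrt (fact m))"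

lemma sym_scale_square: "sym_scale m * sym_scale m = 1 / fact m"
proof -
  have "(1 / sqrt (fact m :: real)) * (1 / sqrt (fact m)) = 1 / fact m"
    by (simp add: real_sqrt_mult[symmetric])
  then show ?thesis by (metis of_real_mult of_real_divide of_real_1 of_real_fact)
qed

lemma cnj_sym_vec: "cnj (sym_vec m \<alpha> i) = sym_vec m \<alpha> i"
  unfolding sym_vec_def by (auto simp: cnj_sum intro!: sum.cong)

lemma sym_vec_arrange:
  "sym_vec m \<alpha> i = sym_scale m * (\<Sum>\<sigma> | \<sigma> permutes {0..<m}. if i = arrange m \<alpha> \<sigma> then 1 else 0)"
  unfolding sym_vec_def arrange_def by simp

lemma sum_mult_sym_vec:
  assumes "\<alpha> \<in> Qmn m n"
  shows "(\<Sum>i\<in>tuples m n. F i * sym_vec m \<alpha> i) = sym_scale m * (\<Sum>\<sigma> | \<sigma> permutes {0..<m}. F (arrange m \<alpha> \<sigma>))"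
proof -
  have in_tuples: "arrange m \<alpha> \<sigma> \<in> tuples m n" if "\<sigma> permutes {0..<m}" for \<sigma>
    using arrange_in_inj_tuples[OF assms that] unfolding inj_tuples_def tuples_def by simp
  have "(\<Sum>i\<in>tuples m n. F i * sym_vec m \<alpha> i)
      = sym_scale m * (\<Sum>\<sigma> | \<sigma> permutes {0..<m}. \<Sum>i\<in>tuples m n. if i = arrange m \<alpha> \<sigma> then F i else 0)"
    unfolding sym_vec_arrange sum_distrib_left
    by (subst sum.swap) (auto intro!: sum.cong simp: algebra_simps)
  also have "\<dots> = sym_scale m * (\<Sum>\<sigma> | \<sigma> permutes {0..<m}. F (arrange m \<alpha> \<sigma>))"
    using in_tuples by (intro sum.cong refl arg_cong[where f = "(*) _"]) (simp add: sum.delta finite_tuples)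
  finally show ?thesis .
qed

lemma sym_vec_orthonormal:
  assumes "\<alpha> \<in> Qmn m n" "\<beta> \<in> Qmn m n"
  shows "tinner m n (sym_vec m \<alpha>) (sym_vec m \<beta>) = (if \<alpha> = \<beta> then 1 else 0)"
proof -
  let ?P = "{\<sigma>. \<sigma> permutes {0..<m}}"
  have eq_iff: "arrange m \<beta> \<sigma>' = arrange m \<alpha> \<sigma> \<longleftrightarrow> \<beta> = \<alpha> \<and> \<sigma>' = \<sigma>" if "\<sigma> \<in> ?P" "\<sigma>' \<in> ?P" for \<sigma> \<sigma>'
    using inj_onD[OF arrange_inj[of m n], of "(\<beta>, \<sigma>')" "(\<alpha>, \<sigma>)"] that assms by auto
  have "tinner m n (sym_vec m \<alpha>) (sym_vec m \<beta>) = (\<Sum>i\<in>tuples m n. sym_vec m \<alpha> i * sym_vec m \<beta> i)"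
    unfolding tinner_def cnj_sym_vec ..
  also have "\<dots> = sym_scale m * (\<Sum>\<sigma>'\<in>?P. sym_vec m \<alpha> (arrange m \<beta> \<sigma>'))"
    by (rule sum_mult_sym_vec[OF assms(2)])
  also have "\<dots> = sym_scale m * sym_scale m * (\<Sum>\<sigma>'\<in>?P. \<Sum>\<sigma>\<in>?P. if \<beta> = \<alpha> \<and> \<sigma>' = \<sigma> then 1 else 0)"
    unfolding sym_vec_arrange sum_distrib_left mult.assoc by (intro sum.cong refl) (simp add: eq_iff)
  also have "\<dots> = sym_scale m * sym_scale m * (if \<alpha> = \<beta> then of_nat (card ?P) else 0)"
    by (cases "\<alpha> = \<beta>") (auto simp: sum.delta finite_permutations)
  also have "card ?P = fact m"
    by (rule card_permutations) auto
  finally show ?thesis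
    unfolding sym_scale_square by simp
qed

(* Consequently P_m fixes each e_J and is self-adjoint against each e_I;
   this removes both projections from the entries of C. *)
lemma Pm_sym_vec:
  assumes "J \<in> Qmn m n"
  shows "Pm m n (sym_vec m J) = sym_vec m J"
proof
  fix i
  have "Pm m n (sym_vec m J) i = (\<Sum>\<alpha>\<in>Qmn m n. if J = \<alpha> then sym_vec m \<alpha> i else 0)"
    unfolding Pm_def by (intro sum.cong refl) (simp add: sym_vec_orthonormal assms)
  then show "Pm m n (sym_vec m J) i = sym_vec m J i"
    using assms by (simp add: sum.delta finite_Qmn)
qed

lemma tinner_Pm_sym_vec:
  assumes "I \<in> Qmn m n"
  shows "tinner m n (Pm m n w) (sym_vec m I) = tinner m n w (sym_vec m I)"
proof -
  have "tinner m n (Pm m n w) (sym_vec m I)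
      = (\<Sum>\<alpha>\<in>Qmn m n. tinner m n w (sym_vec m \<alpha>) * tinner m n (sym_vec m \<alpha>) (sym_vec m I))"
    unfolding tinner_def Pm_def sum_distrib_right sum_distrib_left
    by (subst sum.swap) (simp add: mult.assoc)
  also have "\<dots> = (\<Sum>\<alpha>\<in>Qmn m n. if \<alpha> = I then tinner m n w (sym_vec m I) else 0)"
    by (intro sum.cong refl) (simp add: sym_vec_orthonormal assms)
  finally show ?thesis
    using assms by (simp add: sum.delta' finite_Qmn)
qed

lemma sum_permutes_relabel:
  fixes m :: nat
  assumes \<sigma>: "\<sigma> permutes {0..<m}"
  shows "(\<Sum>\<tau> | \<tau> permutes {0..<m}. \<Sum>\<rho> | \<rho> permutes {0..<m}. \<Prod>k<m. X (\<sigma> k) (I (\<tau> k)) (J (\<rho> k)))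
       = (\<Sum>\<tau> | \<tau> permutes {0..<m}. \<Sum>\<rho> | \<rho> permutes {0..<m}. \<Prod>k<m. X k (I (\<tau> k)) (J (\<rho> k)))"
proof -
  let ?P = "{\<tau>. \<tau> permutes {0..<m}}"
  have inv\<sigma>: "inv \<sigma> permutes {0..<m}" by (rule permutes_inv[OF \<sigma>])
  have "(\<Prod>k<m. X (\<sigma> k) (I (\<tau> k)) (J (\<rho> k))) = (\<Prod>k<m. X k (I ((\<tau> \<circ> inv \<sigma>) k)) (J ((\<rho> \<circ> inv \<sigma>) k)))"
    for \<tau> \<rho> :: "nat \<Rightarrow> nat"
  proof -
    have "bij_betw \<sigma> {..<m} {..<m}"
      using permutes_imp_bij[OF \<sigma>] by (simp add: atLeast0LessThan)
    from prod.reindex_bij_betw[OF this, of "\<lambda>k. X k (I ((\<tau> \<circ> inv \<sigma>) k)) (J ((\<rho> \<circ> inv \<sigma>) k))"]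
    show ?thesis using permutes_inverses(2)[OF \<sigma>] by simp
  qed
  then have "(\<Sum>\<tau>\<in>?P. \<Sum>\<rho>\<in>?P. \<Prod>k<m. X (\<sigma> k) (I (\<tau> k)) (J (\<rho> k)))
      = (\<Sum>\<tau>\<in>?P. \<Sum>\<rho>\<in>?P. \<Prod>k<m. X k (I ((\<tau> \<circ> inv \<sigma>) k)) (J ((\<rho> \<circ> inv \<sigma>) k)))"
    by simp
  also have "\<dots> = (\<Sum>\<tau>\<in>?P. \<Sum>\<rho>\<in>?P. \<Prod>k<m. X k (I (\<tau> k)) (J (\<rho> k)))"
    by (subst sum_permutations_compose_right[OF inv\<sigma>, symmetric],
        rule sum.cong[OF refl], rule sum_permutations_compose_right[OF inv\<sigma>, symmetric])
  finally show ?thesis .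
qed

lemma sym_op_entry:
  assumes I: "I \<in> Qmn m n" and J: "J \<in> Qmn m n"
  shows "tinner m n (sym_op m n X (sym_vec m J)) (sym_vec m I) = 1 / fact m * (1 / fact m) *
    (\<Sum>\<sigma> | \<sigma> permutes {0..<m}. \<Sum>\<tau> | \<tau> permutes {0..<m}. \<Sum>\<rho> | \<rho> permutes {0..<m}.
       \<Prod>k<m. X (\<sigma> k) (I (\<tau> k)) (J (\<rho> k)))"
proof -
  let ?P = "{\<tau>. \<tau> permutes {0..<m}}"
  define K where "K i j = 1 / fact m * (\<Sum>\<sigma>\<in>?P. \<Prod>k<m. X (\<sigma> k) (i k) (j k))" for i j :: "nat \<Rightarrow> nat"
  have K_arrange: "K (arrange m I \<tau>) (arrange m J \<rho>) = 1 / fact m * (\<Sum>\<sigma>\<in>?P. \<Prod>k<m. X (\<sigma> k) (I (\<tau> k)) (J (\<rho> k)))"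
    for \<tau> \<rho> :: "nat \<Rightarrow> nat" unfolding K_def arrange_def by (auto intro!: sum.cong prod.cong)
  have "tinner m n (sym_op m n X (sym_vec m J)) (sym_vec m I)
      = (\<Sum>i\<in>tuples m n. (\<Sum>j\<in>tuples m n. K i j * sym_vec m J j) * sym_vec m I i)"
    unfolding tinner_def sym_op_def cnj_sym_vec K_def ..
  also have "\<dots> = sym_scale m * sym_scale m * (\<Sum>\<tau>\<in>?P. \<Sum>\<rho>\<in>?P. K (arrange m I \<tau>) (arrange m J \<rho>))"
    by (simp add: sum_mult_sym_vec[OF I] sum_mult_sym_vec[OF J] sum_distrib_left mult.assoc)
  also have "(\<Sum>\<tau>\<in>?P. \<Sum>\<rho>\<in>?P. K (arrange m I \<tau>) (arrange m J \<rho>))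
     = 1 / fact m * (\<Sum>\<sigma>\<in>?P. \<Sum>\<tau>\<in>?P. \<Sum>\<rho>\<in>?P. \<Prod>k<m. X (\<sigma> k) (I (\<tau> k)) (J (\<rho> k)))"
    unfolding K_arrange sum_distrib_left
    by (subst sum.swap, rule sum.cong[OF refl], subst sum.swap, simp)
  finally show ?thesis
    unfolding sym_scale_square by (simp only: mult.assoc)
qed

(* The entries of C: the m! relabellings sigma all contribute equally. *)
lemma Cmat_formula:
  assumes "I \<in> Qmn m n" "J \<in> Qmn m n"
  shows "fact m * Cmat m n X I J =
    (\<Sum>\<tau> | \<tau> permutes {0..<m}. \<Sum>\<rho> | \<rho> permutes {0..<m}. \<Prod>k<m. X k (I (\<tau> k)) (J (\<rho> k)))"
proof -
  let ?P = "{\<tau>. \<tau> permutes {0..<m}}"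
  have "Cmat m n X I J = tinner m n (sym_op m n X (sym_vec m J)) (sym_vec m I)"
    unfolding Cmat_def by (simp add: Pm_sym_vec tinner_Pm_sym_vec assms)
  also have "\<dots> = 1 / fact m * (1 / fact m) *
      (\<Sum>\<sigma>\<in>?P. \<Sum>\<tau>\<in>?P. \<Sum>\<rho>\<in>?P. \<Prod>k<m. X k (I (\<tau> k)) (J (\<rho> k)))"
    unfolding sym_op_entry[OF assms] by (rule arg_cong[where f = "(*) _"], rule sum.cong[OF refl]) (simp add: sum_permutes_relabel)
  also have "\<dots> = 1 / fact m * (\<Sum>\<tau>\<in>?P. \<Sum>\<rho>\<in>?P. \<Prod>k<m. X k (I (\<tau> k)) (J (\<rho> k)))"
    using card_permutations[of "{0..<m}" m] by simp
  finally show ?thesis by simp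
qed

lemma trBC_minor_expansion:
  "fact m * trBC m n A X = (\<Sum>r\<in>inj_tuples m {0..<n}. \<Sum>s\<in>inj_tuples m {0..<n}. minor_term m n A X r s)"
proof -
  let ?P = "{\<tau>. \<tau> permutes {0..<m}}"
  have arranged_term: "minor_term m n A X (arrange m I \<tau>) (arrange m J \<rho>) = Bmat m n A J I * (\<Prod>k<m. X k (I (\<tau> k)) (J (\<rho> k)))"
    if "\<tau> \<in> ?P" "\<rho> \<in> ?P" for I J \<tau> \<rho>
    using that unfolding minor_term_def Bmat_def by (simp add: arrange_image) (simp add: arrange_def)
  have "fact m * trBC m n A X = (\<Sum>J\<in>Qmn m n. \<Sum>I\<in>Qmn m n. Bmat m n A J I * (fact m * Cmat m n X I J))"
    unfolding trBC_def sum_distrib_left by (simp add: algebra_simps)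
  also have "\<dots> = (\<Sum>I\<in>Qmn m n. \<Sum>J\<in>Qmn m n. \<Sum>\<tau>\<in>?P. \<Sum>\<rho>\<in>?P. Bmat m n A J I * (\<Prod>k<m. X k (I (\<tau> k)) (J (\<rho> k))))"
    by (subst sum.swap) (simp add: Cmat_formula sum_distrib_left)
  also have "\<dots> = (\<Sum>I\<in>Qmn m n. \<Sum>J\<in>Qmn m n. \<Sum>\<tau>\<in>?P. \<Sum>\<rho>\<in>?P. minor_term m n A X (arrange m I \<tau>) (arrange m J \<rho>))"
    by (intro sum.cong refl) (simp add: arranged_term)
  also have "\<dots> = (\<Sum>I\<in>Qmn m n. \<Sum>\<tau>\<in>?P. \<Sum>J\<in>Qmn m n. \<Sum>\<rho>\<in>?P. minor_term m n A X (arrange m I \<tau>) (arrange m J \<rho>))"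
    by (rule sum.cong[OF refl], rule sum.swap)
  also have "\<dots> = (\<Sum>r\<in>inj_tuples m {0..<n}. \<Sum>s\<in>inj_tuples m {0..<n}. minor_term m n A X r s)"
    by (simp add: sum_inj_tuples_arrange)
  finally show ?thesis .
qed

theorem theorem2p5:
  fixes A :: cmat and X :: "nat \<Rightarrow> cmat" and m n :: nat
  assumes "1 \<le> m" and "m \<le> n"
  shows "Dper m n A X = fact m * trBC m n A X
         \<and> (\<forall>Y :: cmat. Dper m n A (\<lambda>_. Y) = fact m * trBC m n A (\<lambda>_. Y))"
proof -
  have general: "Dper m n A Z = fact m * trBC m n A Z" for Z
    using Dper_minor_expansion[OF assms(2)] trBC_minor_expansion by simp
  then show ?thesis by blast
qed

end
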